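(* Let $f:\mathbb{R}^n\to\mathbb{R}$ have $L$-Lipschitz continuous gradient ($L>0$) and satisfy the Polyak–Łojasiewicz condition with constant $\mu>0$: $f(x)-f^*\le \frac{1}{2\mu}\|\nabla f(x)\|^2$ for all $x$, where $f^*=f(x_* )$ for a minimizer $x_*$. Let $\Delta>0$ and suppose an inexact gradient $\widetilde{\nabla}f(x)$ is available with $\|\nabla f(x)-\widetilde{\nabla}f(x)\|\le\Delta$ for all $x$. Consider the gradient method $x_{k+1}=x_k-\frac1L\widetilde{\nabla}f(x_k)$ from $x_0$, and let $$N_*=\left\lceil\frac{L}{\mu}\ln\frac{\mu(f(x_0)-f^* )}{6\Delta^2}\right\rceil.$$ Suppose one of the following holds: (1) the method performs $N_*$ steps (output $\widehat{x}=x_{N_*}$); or (2) for some $N\le N_*$ the stopping criterion $\|\widetilde{\nabla}f(x_k)\|\le\sqrt6\,\Delta$ is satisfied for the first time at iteration $N$ (output $\widehat{x}=x_N$). Then $$f(\widehat{x})-f^*\le\frac{7\Delta^2}{\mu}$$ and $$\|\widehat{x}-x_0\|\le\frac{2\Delta}{\mu}\sqrt{1+\frac{L}{\mu}}\left\lceil\ln\frac{\mu(f(x_0)-f^* )}{6\Delta^2}\right\rceil+\frac{4\sqrt{L(f(x_0)-f^* )}}{\mu}.$$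
   Context: $\|\cdot\|$ is the Euclidean norm; $\lceil\cdot\rceil$ is the ceiling function. *)

theory Defs
  imports "HOL-Analysis.Analysis"
begin

end

theory Submission
  imports Defs
begin

(* The descent lemma applied to an inexact step gives
     f(x_{k+1}) <= f(x_k) + (Delta^2 - |grad f(x_k)|^2) / (2 L).
   With the PL condition the gap f(x_k) - f_min therefore contracts by the factor 1 - mu/L up to the
   level Delta^2/(2 mu), so after N_* steps it is at most 6 Delta^2/mu + Delta^2/(2 mu); at a stopping
   iteration |grad f| <= (sqrt 6 + 1) Delta, and the PL condition alone gives the bound.
   For the distance: as long as |gt(x_k)| >= 2 Delta, the PL bound |grad f(x_k)| >= sqrt(2 mu (f(x_k) - f_min))
   turns the descent inequality into a bound of the step length |gt(x_k)|/L by
   2 sqrt(2/mu) (sqrt(f(x_k) - f_min) - sqrt(f(x_{k+1}) - f_min)) + 2 Delta/L, which telescopes. *)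

lemma lipschitz_gradient_upper_bound:
  fixes f :: "'a::real_inner \<Rightarrow> real" and grad :: "'a \<Rightarrow> 'a"
  assumes grad: "\<And>y. (f has_derivative (\<lambda>h. grad y \<bullet> h)) (at y)"
    and lip: "L-lipschitz_on UNIV grad"
  shows "f y \<le> f x + grad x \<bullet> (y - x) + L / 2 * (norm (y - x))\<^sup>2"
proof -
  define h where "h = y - x"
  define \<phi> where "\<phi> t = f (x + t *\<^sub>R h) - t * (grad x \<bullet> h) - L / 2 * t\<^sup>2 * (norm h)\<^sup>2" for t
  have deriv_f: "((\<lambda>t. f (x + t *\<^sub>R h)) has_real_derivative (grad (x + t *\<^sub>R h) \<bullet> h)) (at t)" for t
  proof -
    have "((\<lambda>t. x + t *\<^sub>R h) has_derivative (\<lambda>s. s *\<^sub>R h)) (at t)"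
      by (auto intro!: derivative_eq_intros)
    from has_derivative_compose[OF this grad]
    show ?thesis
      by (simp add: has_field_derivative_def mult_commute_abs)
  qed
  have deriv_\<phi>: "(\<phi> has_real_derivative
      ((grad (x + t *\<^sub>R h) - grad x) \<bullet> h - L * t * (norm h)\<^sup>2)) (at t)" for t
    unfolding \<phi>_def inner_diff_left by (rule derivative_eq_intros deriv_f refl | simp)+
  have "(grad (x + t *\<^sub>R h) - grad x) \<bullet> h \<le> L * t * (norm h)\<^sup>2" if "0 \<le> t" for t
  proof -
    have "(grad (x + t *\<^sub>R h) - grad x) \<bullet> h \<le> norm (grad (x + t *\<^sub>R h) - grad x) * norm h"
      by (rule norm_cauchy_schwarz)
    also have "\<dots> \<le> L * norm (t *\<^sub>R h) * norm h"
      using lipschitz_onD[OF lip, of "x + t *\<^sub>R h" x] by (simp add: dist_norm mult_right_mono)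
    also have "\<dots> = L * t * (norm h)\<^sup>2"
      using that by (simp add: power2_eq_square)
    finally show ?thesis .
  qed
  then have "\<phi> 1 \<le> \<phi> 0"
    using deriv_\<phi> by (intro DERIV_nonpos_imp_nonincreasing[of 0 1]) force+
  then show ?thesis
    unfolding \<phi>_def h_def by simp
qed

lemma lipschitz_gradient_step_le:
  fixes f :: "'a::real_inner \<Rightarrow> real" and grad :: "'a \<Rightarrow> 'a"
  assumes L: "L > 0"
    and grad: "\<And>y. (f has_derivative (\<lambda>h. grad y \<bullet> h)) (at y)"
    and lip: "L-lipschitz_on UNIV grad"
  shows "f (x - (1 / L) *\<^sub>R v) \<le> f x + ((norm (v - grad x))\<^sup>2 - (norm (grad x))\<^sup>2) / (2 * L)"
proof -
  have "f (x - (1 / L) *\<^sub>R v) \<le> f x - (v \<bullet> grad x) / L + L / 2 * (norm ((1 / L) *\<^sub>R v))\<^sup>2"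
    using lipschitz_gradient_upper_bound[OF grad lip, of "x - (1 / L) *\<^sub>R v" x]
    by (simp add: inner_commute)
  also have "\<dots> = f x + ((norm v)\<^sup>2 - 2 * (v \<bullet> grad x)) / (2 * L)"
    using L by (simp add: power2_eq_square field_simps)
  also have "(norm v)\<^sup>2 - 2 * (v \<bullet> grad x) = (norm (v - grad x))\<^sup>2 - (norm (grad x))\<^sup>2"
    by (simp add: power2_norm_eq_inner inner_diff_left inner_diff_right inner_commute)
  finally show ?thesis .
qed

lemma lipschitz_gradient_norm_sq_le_gap:
  fixes f :: "'a::real_inner \<Rightarrow> real" and grad :: "'a \<Rightarrow> 'a"
  assumes "L > 0"
    and "\<And>y. (f has_derivative (\<lambda>h. grad y \<bullet> h)) (at y)"
    and "L-lipschitz_on UNIV grad"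
    and minimizer: "\<And>y. f xs \<le> f y"
  shows "(norm (grad y))\<^sup>2 / (2 * L) \<le> f y - f xs"
  using lipschitz_gradient_step_le[OF assms(1-3), of y "grad y"] minimizer[of "y - (1 / L) *\<^sub>R grad y"]
  by (simp add: diff_divide_distrib)

locale inexact_gradient_method =
  fixes f :: "'a::real_inner \<Rightarrow> real" and grad gt :: "'a \<Rightarrow> 'a" and xs :: 'a
    and x :: "nat \<Rightarrow> 'a" and L \<mu> \<Delta> :: real
  assumes L_pos: "L > 0"
    and has_grad: "\<And>y. (f has_derivative (\<lambda>h. grad y \<bullet> h)) (at y)"
    and lipschitz_grad: "L-lipschitz_on UNIV grad"
    and minimizer: "\<And>y. f xs \<le> f y"
    and mu_pos: "\<mu> > 0"
    and PL: "\<And>y. f y - f xs \<le> 1 / (2 * \<mu>) * (norm (grad y))\<^sup>2"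
    and Delta_pos: "\<Delta> > 0"
    and inexact: "\<And>y. norm (grad y - gt y) \<le> \<Delta>"
    and x_Suc: "\<And>k. x (Suc k) = x k - (1 / L) *\<^sub>R gt (x k)"
begin

definition gap :: "nat \<Rightarrow> real"
  where "gap k = f (x k) - f xs"

(* If gap 0 = 0 this is ln 0 = 0, hence Nstar = 0. *)
definition log_gap_ratio :: real
  where "log_gap_ratio = ln (\<mu> * gap 0 / (6 * \<Delta>\<^sup>2))"

definition Nstar :: int
  where "Nstar = \<lceil>L / \<mu> * log_gap_ratio\<rceil>"

lemma gap_nonneg: "0 \<le> gap k"
  using minimizer[of "x k"] by (simp add: gap_def)

lemma PL_gap: "2 * \<mu> * gap k \<le> (norm (grad (x k)))\<^sup>2"
  using PL[of "x k"] mu_pos by (simp add: gap_def field_simps)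

lemma mu_le_L:
  assumes "f xs < f y"
  shows "\<mu> \<le> L"
proof -
  have "(norm (grad y))\<^sup>2 / (2 * L) \<le> f y - f xs"
    by (rule lipschitz_gradient_norm_sq_le_gap[OF L_pos has_grad lipschitz_grad minimizer])
  also have "\<dots> \<le> (norm (grad y))\<^sup>2 / (2 * \<mu>)"
    using PL[of y] by simp
  finally have "(norm (grad y))\<^sup>2 / (2 * L) \<le> (norm (grad y))\<^sup>2 / (2 * \<mu>)" .
  moreover have "grad y \<noteq> 0"
    using PL[of y] assms by auto
  ultimately show ?thesis
    using L_pos mu_pos by (simp add: divide_le_cancel frac_le_eq field_simps)
qed

lemma norm_grad_le: "norm (grad y) \<le> norm (gt y) + \<Delta>"
  using norm_triangle_ineq[of "gt y" "grad y - gt y"] inexact[of y] by simp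

lemma norm_gt_le: "norm (gt y) \<le> norm (grad y) + \<Delta>"
  using norm_triangle_ineq4[of "grad y" "grad y - gt y"] inexact[of y] by simp

lemma gap_Suc_le: "gap (Suc k) \<le> gap k + (\<Delta>\<^sup>2 - (norm (grad (x k)))\<^sup>2) / (2 * L)"
proof -
  have "f (x (Suc k)) \<le> f (x k) + ((norm (gt (x k) - grad (x k)))\<^sup>2 - (norm (grad (x k)))\<^sup>2) / (2 * L)"
    unfolding x_Suc by (rule lipschitz_gradient_step_le[OF L_pos has_grad lipschitz_grad])
  moreover have "(norm (gt (x k) - grad (x k)))\<^sup>2 \<le> \<Delta>\<^sup>2"
    using inexact[of "x k"] by (simp add: norm_minus_commute power_mono)
  then have "((norm (gt (x k) - grad (x k)))\<^sup>2 - (norm (grad (x k)))\<^sup>2) / (2 * L)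
      \<le> (\<Delta>\<^sup>2 - (norm (grad (x k)))\<^sup>2) / (2 * L)"
    using L_pos by (intro divide_right_mono) auto
  ultimately show ?thesis
    by (simp add: gap_def)
qed

lemma gap_Suc_le_contraction: "gap (Suc k) \<le> (1 - \<mu> / L) * gap k + \<Delta>\<^sup>2 / (2 * L)"
proof -
  have "gap (Suc k) \<le> gap k + (\<Delta>\<^sup>2 - 2 * \<mu> * gap k) / (2 * L)"
    using gap_Suc_le[of k] PL_gap[of k] L_pos by (smt (verit) divide_right_mono)
  also have "\<dots> = (1 - \<mu> / L) * gap k + \<Delta>\<^sup>2 / (2 * L)"
    using L_pos by (simp add: field_simps)
  finally show ?thesis .
qed

lemma gap_le_linear_convergence:
  assumes "\<mu> \<le> L"
  shows "gap k \<le> (1 - \<mu> / L) ^ k * gap 0 + \<Delta>\<^sup>2 / (2 * \<mu>)"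
proof (induction k)
  case 0
  then show ?case using mu_pos by simp
next
  case (Suc k)
  have "0 \<le> 1 - \<mu> / L"
    using assms L_pos by simp
  then have "gap (Suc k) \<le> (1 - \<mu> / L) * ((1 - \<mu> / L) ^ k * gap 0 + \<Delta>\<^sup>2 / (2 * \<mu>)) + \<Delta>\<^sup>2 / (2 * L)"
    using gap_Suc_le_contraction[of k] Suc.IH by (smt (verit) mult_left_mono)
  also have "\<dots> = (1 - \<mu> / L) ^ Suc k * gap 0 + \<Delta>\<^sup>2 / (2 * \<mu>)"
    using L_pos mu_pos by (simp add: field_simps power2_eq_square)
  finally show ?case .
qed

lemma gap_at_Nstar: "gap (nat Nstar) \<le> 7 * \<Delta>\<^sup>2 / \<mu>"
proof (cases "gap 0 = 0")
  case True
  then show ?thesis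
    using Delta_pos mu_pos by (simp add: Nstar_def log_gap_ratio_def)
next
  case False
  then have gap0: "0 < gap 0"
    using gap_nonneg[of 0] by simp
  then have "\<mu> \<le> L"
    using mu_le_L[of "x 0"] by (simp add: gap_def)
  define N where "N = nat Nstar"
  have "(1 - \<mu> / L) ^ N \<le> exp (- \<mu> / L) ^ N"
    using \<open>\<mu> \<le> L\<close> L_pos exp_ge_add_one_self[of "- \<mu> / L"] by (intro power_mono) auto
  also have "\<dots> = exp (- (real N * \<mu> / L))"
    by (simp add: exp_of_nat_mult[symmetric])
  also have "\<dots> \<le> exp (- log_gap_ratio)"
  proof -
    have "L / \<mu> * log_gap_ratio \<le> real N"
      unfolding N_def Nstar_def by (rule real_nat_ceiling_ge)
    then have "log_gap_ratio \<le> real N * \<mu> / L"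
      using L_pos mu_pos by (simp add: field_simps)
    then show ?thesis
      by simp
  qed
  also have "\<dots> = 6 * \<Delta>\<^sup>2 / (\<mu> * gap 0)"
    using gap0 mu_pos Delta_pos by (simp add: log_gap_ratio_def exp_minus')
  finally have "(1 - \<mu> / L) ^ N * gap 0 \<le> 6 * \<Delta>\<^sup>2 / (\<mu> * gap 0) * gap 0"
    using gap0 by (intro mult_right_mono) auto
  then have "gap N \<le> 6 * \<Delta>\<^sup>2 / \<mu> + \<Delta>\<^sup>2 / (2 * \<mu>)"
    using gap_le_linear_convergence[OF \<open>\<mu> \<le> L\<close>, of N] gap0 by simp
  also have "\<dots> \<le> 7 * \<Delta>\<^sup>2 / \<mu>"
    using mu_pos by (simp add: field_simps)
  finally show ?thesis
    unfolding N_def .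
qed

lemma gap_le_at_stop:
  assumes "norm (gt (x k)) \<le> sqrt 6 * \<Delta>"
  shows "gap k \<le> 7 * \<Delta>\<^sup>2 / \<mu>"
proof -
  have "norm (grad (x k)) \<le> (sqrt 6 + 1) * \<Delta>"
    using assms norm_grad_le[of "x k"] by (simp add: algebra_simps)
  then have "(norm (grad (x k)))\<^sup>2 \<le> ((sqrt 6 + 1) * \<Delta>)\<^sup>2"
    by (rule power_mono) simp
  also have "\<dots> = (7 + 2 * sqrt 6) * \<Delta>\<^sup>2"
    by (simp add: power2_eq_square algebra_simps)
  also have "\<dots> \<le> 14 * \<Delta>\<^sup>2"
    using real_less_lsqrt[of 3 6] by (intro mult_right_mono) auto
  finally show ?thesis
    using PL_gap[of k] mu_pos by (simp add: field_simps)
qed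

lemma norm_grad_sub_le_sqrt_gap_decrease:
  assumes "\<Delta> \<le> norm (grad (x k))"
  shows "norm (grad (x k)) - \<Delta> \<le> L * (2 * sqrt (2 / \<mu>) * (sqrt (gap k) - sqrt (gap (Suc k))))"
proof -
  define a u v where "a = norm (grad (x k))" and "u = sqrt (gap k)" and "v = sqrt (gap (Suc k))"
  have u_sq: "u\<^sup>2 = gap k" and v_sq: "v\<^sup>2 = gap (Suc k)" and "0 \<le> u"
    using gap_nonneg by (simp_all add: u_def v_def)
  have descent: "a\<^sup>2 - \<Delta>\<^sup>2 \<le> 2 * L * (u\<^sup>2 - v\<^sup>2)"
    using gap_Suc_le[of k] L_pos unfolding u_sq v_sq a_def by (simp add: field_simps)
  have "sqrt (2 * \<mu>) * u \<le> a"
    using real_sqrt_le_mono[OF PL_gap[of k]] by (simp add: a_def u_def real_sqrt_mult)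
  then have PL_u: "u \<le> a / sqrt (2 * \<mu>)"
    using mu_pos by (simp add: pos_le_divide_eq mult.commute)
  have "\<Delta>\<^sup>2 \<le> a\<^sup>2"
    using assms Delta_pos by (intro power_mono) (auto simp: a_def)
  then have "0 \<le> 2 * L * (u\<^sup>2 - v\<^sup>2)"
    using descent by linarith
  then have "v\<^sup>2 \<le> u\<^sup>2"
    using L_pos by (simp add: zero_le_mult_iff)
  then have "v \<le> u"
    using \<open>0 \<le> u\<close> by (rule power2_le_imp_le)
  have "\<Delta> * \<Delta> \<le> \<Delta> * a"
    using assms Delta_pos by (intro mult_left_mono) (auto simp: a_def)
  then have "(a - \<Delta>) * a \<le> a\<^sup>2 - \<Delta>\<^sup>2"
    by (simp add: power2_eq_square algebra_simps)
  also note descent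
  also have "2 * L * (u\<^sup>2 - v\<^sup>2) \<le> 2 * L * (2 * u * (u - v))"
    using L_pos zero_le_power2[of "u - v"]
    by (intro mult_left_mono) (auto simp: power2_eq_square algebra_simps)
  also have "\<dots> \<le> 2 * L * (2 * (a / sqrt (2 * \<mu>)) * (u - v))"
    using PL_u L_pos \<open>v \<le> u\<close> by (intro mult_left_mono mult_right_mono) auto
  also have "\<dots> = (L * (4 / sqrt (2 * \<mu>)) * (u - v)) * a"
    by simp
  also have "4 / sqrt (2 * \<mu>) = 2 * sqrt (2 / \<mu>)"
    using mu_pos by (simp add: real_sqrt_divide real_sqrt_mult field_simps)
  finally have "(a - \<Delta>) * a \<le> (L * (2 * sqrt (2 / \<mu>)) * (u - v)) * a" .
  moreover have "0 < a"
    using assms Delta_pos unfolding a_def by linarith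
  ultimately have "a - \<Delta> \<le> L * (2 * sqrt (2 / \<mu>)) * (u - v)"
    by simp
  then show ?thesis
    by (simp add: a_def u_def v_def mult.assoc)
qed

lemma step_norm_le:
  assumes "2 * \<Delta> \<le> norm (gt (x k))"
  shows "norm (x (Suc k) - x k) \<le> 2 * sqrt (2 / \<mu>) * (sqrt (gap k) - sqrt (gap (Suc k))) + 2 * \<Delta> / L"
proof -
  have "\<Delta> \<le> norm (grad (x k))"
    using assms norm_gt_le[of "x k"] by simp
  then have "(norm (grad (x k)) - \<Delta>) / L \<le> 2 * sqrt (2 / \<mu>) * (sqrt (gap k) - sqrt (gap (Suc k)))"
    using norm_grad_sub_le_sqrt_gap_decrease[of k] L_pos by (simp add: pos_divide_le_eq mult.commute)
  moreover have "norm (x (Suc k) - x k) = norm (gt (x k)) / L"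
    using L_pos by (simp add: x_Suc)
  moreover have "norm (gt (x k)) / L \<le> (norm (grad (x k)) - \<Delta>) / L + 2 * \<Delta> / L"
    using norm_gt_le[of "x k"] L_pos by (simp add: divide_right_mono flip: add_divide_distrib)
  ultimately show ?thesis
    by linarith
qed

lemma dist_from_start_le:
  assumes "\<And>k. k < N \<Longrightarrow> 2 * \<Delta> \<le> norm (gt (x k))"
  shows "norm (x N - x 0) \<le> 2 * sqrt (2 / \<mu>) * sqrt (gap 0) + real N * (2 * \<Delta> / L)"
proof -
  have "norm (x N - x 0) = norm (\<Sum>k<N. x (Suc k) - x k)"
    by (simp add: sum_lessThan_telescope)
  also have "\<dots> \<le> (\<Sum>k<N. norm (x (Suc k) - x k))"
    by (rule norm_sum)
  also have "\<dots> \<le> (\<Sum>k<N. 2 * sqrt (2 / \<mu>) * (sqrt (gap k) - sqrt (gap (Suc k))) + 2 * \<Delta> / L)"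
    using assms step_norm_le by (intro sum_mono) auto
  also have "\<dots> = 2 * sqrt (2 / \<mu>) * (sqrt (gap 0) - sqrt (gap N)) + real N * (2 * \<Delta> / L)"
    by (simp add: sum.distrib sum_distrib_left[symmetric] sum_lessThan_telescope'[of "\<lambda>k. sqrt (gap k)"])
  also have "\<dots> \<le> 2 * sqrt (2 / \<mu>) * sqrt (gap 0) + real N * (2 * \<Delta> / L)"
    using gap_nonneg[of N] mu_pos by (simp add: right_diff_distrib)
  finally show ?thesis .
qed

lemma ceiling_log_gap_ratio_nonneg:
  assumes "0 \<le> Nstar"
  shows "0 \<le> \<lceil>log_gap_ratio\<rceil>"
proof (cases "0 \<le> log_gap_ratio")
  case False
  then have "gap 0 \<noteq> 0"
    by (auto simp: log_gap_ratio_def)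
  then have "\<mu> \<le> L"
    using mu_le_L[of "x 0"] gap_nonneg[of 0] by (simp add: gap_def)
  then have "L / \<mu> * log_gap_ratio \<le> 1 * log_gap_ratio"
    using False mu_pos by (intro mult_right_mono_neg) auto
  then have "Nstar \<le> \<lceil>log_gap_ratio\<rceil>"
    unfolding Nstar_def by (simp add: ceiling_mono)
  with assms show ?thesis
    by linarith
qed simp

lemma sqrt_gap_bound:
  assumes "6 * \<Delta>\<^sup>2 < \<mu> * gap 0" and "\<mu> \<le> L"
  shows "2 * sqrt (2 / \<mu>) * sqrt (gap 0) + 2 * \<Delta> / L \<le> 4 * sqrt (L * gap 0) / \<mu>"
proof -
  define s where "s = sqrt (gap 0 / \<mu>)"
  have "0 \<le> s"
    using gap_nonneg[of 0] mu_pos by (simp add: s_def)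
  have "2 * sqrt (2 / \<mu>) * sqrt (gap 0) = 2 * sqrt 2 * s"
    by (simp add: s_def real_sqrt_divide real_sqrt_mult)
  also have "\<dots> \<le> 3 * s"
    using real_le_lsqrt[of "3 / 2" 2] \<open>0 \<le> s\<close> by (intro mult_right_mono) (auto simp: power2_eq_square)
  finally have first: "2 * sqrt (2 / \<mu>) * sqrt (gap 0) \<le> 3 * s" .
  have "2 * \<Delta> / L \<le> 2 * \<Delta> / \<mu>"
    using assms(2) mu_pos Delta_pos by (simp add: frac_le)
  also have "\<dots> \<le> s"
  proof (unfold s_def, rule real_le_rsqrt)
    have "4 * \<Delta>\<^sup>2 \<le> \<mu> * gap 0"
      using assms(1) zero_le_power2[of \<Delta>] by linarith
    then show "(2 * \<Delta> / \<mu>)\<^sup>2 \<le> gap 0 / \<mu>"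
      using mu_pos by (simp add: power_divide field_simps power2_eq_square)
  qed
  finally have second: "2 * \<Delta> / L \<le> s" .
  have "s = sqrt (\<mu> / L) * (sqrt (L * gap 0) / \<mu>)"
    using mu_pos L_pos by (simp add: s_def real_sqrt_divide real_sqrt_mult field_simps)
  also have "\<dots> \<le> 1 * (sqrt (L * gap 0) / \<mu>)"
    using assms(2) mu_pos gap_nonneg[of 0] by (intro mult_right_mono) auto
  finally have "4 * s \<le> 4 * sqrt (L * gap 0) / \<mu>"
    by simp
  with first second show ?thesis
    by linarith
qed

lemma iteration_error_le:
  assumes "int N \<le> Nstar" and "0 < log_gap_ratio"
  shows "real N * (2 * \<Delta> / L)
    \<le> 2 * \<Delta> / \<mu> * sqrt (1 + L / \<mu>) * of_int \<lceil>log_gap_ratio\<rceil> + 2 * \<Delta> / L"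
proof -
  have "log_gap_ratio \<le> 1 * of_int \<lceil>log_gap_ratio\<rceil>"
    by simp
  also have "\<dots> \<le> sqrt (1 + L / \<mu>) * of_int \<lceil>log_gap_ratio\<rceil>"
    using assms(2) L_pos mu_pos by (intro mult_right_mono) auto
  finally have log_le: "log_gap_ratio \<le> sqrt (1 + L / \<mu>) * of_int \<lceil>log_gap_ratio\<rceil>" .
  have "real N \<le> L / \<mu> * log_gap_ratio + 1"
    using assms(1) unfolding Nstar_def by linarith
  then have "real N * (2 * \<Delta> / L) \<le> (L / \<mu> * log_gap_ratio + 1) * (2 * \<Delta> / L)"
    using L_pos Delta_pos by (intro mult_right_mono) auto
  also have "\<dots> = 2 * \<Delta> / \<mu> * log_gap_ratio + 2 * \<Delta> / L"
    using L_pos mu_pos by (simp add: field_simps)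
  also have "\<dots> \<le> 2 * \<Delta> / \<mu> * (sqrt (1 + L / \<mu>) * of_int \<lceil>log_gap_ratio\<rceil>) + 2 * \<Delta> / L"
    using log_le Delta_pos mu_pos by (intro add_right_mono mult_left_mono) auto
  finally show ?thesis
    by (simp add: mult.assoc)
qed

lemma dist_from_start_le_Nstar:
  assumes "int N \<le> Nstar" and "\<And>k. k < N \<Longrightarrow> 2 * \<Delta> \<le> norm (gt (x k))"
  shows "norm (x N - x 0)
    \<le> 2 * \<Delta> / \<mu> * sqrt (1 + L / \<mu>) * of_int \<lceil>log_gap_ratio\<rceil> + 4 * sqrt (L * gap 0) / \<mu>"
proof (cases "N = 0")
  case True
  then show ?thesis
    using assms(1) ceiling_log_gap_ratio_nonneg mu_pos Delta_pos L_pos gap_nonneg[of 0] by simp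
next
  case False
  then have "1 \<le> Nstar"
    using assms(1) by linarith
  then have lg_pos: "0 < log_gap_ratio"
    using L_pos mu_pos by (simp add: Nstar_def zero_less_mult_iff zero_less_divide_iff)
  then have "gap 0 \<noteq> 0"
    by (auto simp: log_gap_ratio_def)
  then have gap0: "0 < gap 0"
    using gap_nonneg[of 0] by simp
  then have "\<mu> \<le> L"
    using mu_le_L[of "x 0"] by (simp add: gap_def)
  have "6 * \<Delta>\<^sup>2 < \<mu> * gap 0"
    using lg_pos gap0 mu_pos Delta_pos by (simp add: log_gap_ratio_def)
  then have "2 * sqrt (2 / \<mu>) * sqrt (gap 0) + 2 * \<Delta> / L \<le> 4 * sqrt (L * gap 0) / \<mu>"
    using \<open>\<mu> \<le> L\<close> by (rule sqrt_gap_bound)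
  then show ?thesis
    using dist_from_start_le[of N, OF assms(2)] iteration_error_le[OF assms(1) lg_pos] by linarith
qed

end

theorem theorem3:
  fixes f :: "real ^ 'n \<Rightarrow> real"
    and grad gt :: "real ^ 'n \<Rightarrow> real ^ 'n"
    and xs x0 :: "real ^ 'n"
    and x :: "nat \<Rightarrow> real ^ 'n"
    and L \<mu> \<Delta> :: real
    and xhat :: "real ^ 'n"
  assumes L_pos: "L > 0"
    and grad: "\<And>y. (f has_derivative (\<lambda>h. grad y \<bullet> h)) (at y)"
    and lip: "L-lipschitz_on UNIV grad"
    and minimizer: "\<And>y. f xs \<le> f y"
    and mu_pos: "\<mu> > 0"
    and PL: "\<And>y. f y - f xs \<le> 1 / (2 * \<mu>) * (norm (grad y))\<^sup>2"
    and Delta_pos: "\<Delta> > 0"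
    and inexact: "\<And>y. norm (grad y - gt y) \<le> \<Delta>"
    and x_0: "x 0 = x0"
    and x_Suc: "\<And>k. x (Suc k) = x k - (1 / L) *\<^sub>R gt (x k)"
    and Nstar_nonneg:
      "0 \<le> \<lceil>L / \<mu> * ln (\<mu> * (f x0 - f xs) / (6 * \<Delta>\<^sup>2))\<rceil>"
    and stop_rule:
      "(\<forall>k. int k < \<lceil>L / \<mu> * ln (\<mu> * (f x0 - f xs) / (6 * \<Delta>\<^sup>2))\<rceil>
              \<longrightarrow> norm (gt (x k)) > sqrt 6 * \<Delta>)
         \<and> xhat = x (nat \<lceil>L / \<mu> * ln (\<mu> * (f x0 - f xs) / (6 * \<Delta>\<^sup>2))\<rceil>)
       \<or> (\<exists>N::nat. int N \<le> \<lceil>L / \<mu> * ln (\<mu> * (f x0 - f xs) / (6 * \<Delta>\<^sup>2))\<rceil>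
              \<and> norm (gt (x N)) \<le> sqrt 6 * \<Delta>
              \<and> (\<forall>k<N. norm (gt (x k)) > sqrt 6 * \<Delta>)
              \<and> xhat = x N)"
  shows "f xhat - f xs \<le> 7 * \<Delta>\<^sup>2 / \<mu>
     \<and> norm (xhat - x0) \<le>
           2 * \<Delta> / \<mu> * sqrt (1 + L / \<mu>)
             * of_int \<lceil>ln (\<mu> * (f x0 - f xs) / (6 * \<Delta>\<^sup>2))\<rceil>
           + 4 * sqrt (L * (f x0 - f xs)) / \<mu>"
proof -
  interpret inexact_gradient_method f grad gt xs x L \<mu> \<Delta>
    using L_pos grad lip minimizer mu_pos PL Delta_pos inexact x_Suc by unfold_locales
  have gap_0: "gap 0 = f x0 - f xs"
    by (simp add: gap_def x_0)
  have log_ratio: "log_gap_ratio = ln (\<mu> * (f x0 - f xs) / (6 * \<Delta>\<^sup>2))"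
    by (simp add: log_gap_ratio_def gap_0)
  have Nstar: "Nstar = \<lceil>L / \<mu> * ln (\<mu> * (f x0 - f xs) / (6 * \<Delta>\<^sup>2))\<rceil>"
    by (simp add: Nstar_def log_ratio)
  obtain N where xhat: "xhat = x N" and "int N \<le> Nstar"
    and before_stop: "\<And>k. k < N \<Longrightarrow> sqrt 6 * \<Delta> < norm (gt (x k))"
    and "gap N \<le> 7 * \<Delta>\<^sup>2 / \<mu>"
    using stop_rule unfolding Nstar[symmetric]
  proof (elim disjE conjE exE)
    assume "\<forall>k. int k < Nstar \<longrightarrow> sqrt 6 * \<Delta> < norm (gt (x k))" and "xhat = x (nat Nstar)"
    then show thesis
      using that[of "nat Nstar"] gap_at_Nstar Nstar_nonneg[folded Nstar] by auto
  next
    fix N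
    assume "int N \<le> Nstar" and "norm (gt (x N)) \<le> sqrt 6 * \<Delta>"
      and "\<forall>k<N. sqrt 6 * \<Delta> < norm (gt (x k))" and "xhat = x N"
    then show thesis
      using that[of N] gap_le_at_stop[of N] by auto
  qed
  have "2 * \<Delta> \<le> sqrt 6 * \<Delta>"
    using real_le_rsqrt[of 2 6] Delta_pos by (intro mult_right_mono) auto
  with before_stop have "2 * \<Delta> \<le> norm (gt (x k))" if "k < N" for k
    using that by force
  with \<open>int N \<le> Nstar\<close> \<open>gap N \<le> 7 * \<Delta>\<^sup>2 / \<mu>\<close> show ?thesis
    using dist_from_start_le_Nstar[of N] by (simp add: xhat gap_def x_0 log_ratio)
qed

end
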